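(* Let $k\ge2$, $\varepsilon>0$, and let $r$ be a multiple of $k$ with $r\ge 6/\varepsilon$. Let $R$ be a graph on $[r]$ with $\delta(R)\ge(1-\frac1k+\varepsilon)r$, and let $Q$ be a $K_k$-factor of $R$ consisting of the vertex-disjoint cliques $Q^1,\dots,Q^{r/k}$. Let $D$ be the directed graph on $[r]$ with arc set $\{\overrightarrow{ij}: i\ne j\in[r],\ N_Q(j)\subseteq N_R(i)\}$. Then there exist at least two indices $s\in[r/k]$ such that for every $j\in V(Q^s)$ and every $i\in[r]\setminus\{j\}$ there is a directed path from $i$ to $j$ in $D$.
   Context: $N_Q(j)$ denotes the neighbourhood of $j$ in $Q$ (the other $k-1$ vertices of the clique of $Q$ containing $j$), and $N_R(i)$ the neighbourhood of $i$ in $R$. A $K_k$-factor of $R$ is a spanning subgraph consisting of vertex-disjoint copies of $K_k$. *)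

theory Defs
  imports Main Complex_Main
begin

definition simple_graph_on :: "nat \<Rightarrow> (nat \<Rightarrow> nat \<Rightarrow> bool) \<Rightarrow> bool" where
  "simple_graph_on r E \<longleftrightarrow>
     (\<forall>u v. E u v \<longrightarrow> u \<in> {1..r} \<and> v \<in> {1..r}) \<and>
     (\<forall>u v. E u v \<longrightarrow> E v u) \<and> (\<forall>u. \<not> E u u)"

definition nbhd :: "(nat \<Rightarrow> nat \<Rightarrow> bool) \<Rightarrow> nat \<Rightarrow> nat set" where
  "nbhd E i = {u. E i u}"

definition min_degree_ge :: "nat \<Rightarrow> (nat \<Rightarrow> nat \<Rightarrow> bool) \<Rightarrow> real \<Rightarrow> bool" where
  "min_degree_ge r E d \<longleftrightarrow> (\<forall>v \<in> {1..r}. real (card (nbhd E v)) \<ge> d)"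

definition Kk_factor :: "nat \<Rightarrow> nat \<Rightarrow> (nat \<Rightarrow> nat \<Rightarrow> bool) \<Rightarrow> (nat \<Rightarrow> nat set) \<Rightarrow> bool" where
  "Kk_factor r k E Q \<longleftrightarrow>
     (\<forall>s \<in> {1..r div k}. Q s \<subseteq> {1..r} \<and> card (Q s) = k \<and>
        (\<forall>u \<in> Q s. \<forall>v \<in> Q s. u \<noteq> v \<longrightarrow> E u v)) \<and>
     (\<forall>s \<in> {1..r div k}. \<forall>t \<in> {1..r div k}. s \<noteq> t \<longrightarrow> Q s \<inter> Q t = {}) \<and>
     (\<Union>s \<in> {1..r div k}. Q s) = {1..r}"

definition nbhdQ :: "nat \<Rightarrow> nat \<Rightarrow> (nat \<Rightarrow> nat set) \<Rightarrow> nat \<Rightarrow> nat set" where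
  "nbhdQ r k Q j = (\<Union>s \<in> {s \<in> {1..r div k}. j \<in> Q s}. Q s - {j})"

definition arcsD :: "nat \<Rightarrow> nat \<Rightarrow> (nat \<Rightarrow> nat \<Rightarrow> bool) \<Rightarrow> (nat \<Rightarrow> nat set) \<Rightarrow> (nat \<times> nat) set" where
  "arcsD r k E Q = {(i, j). i \<in> {1..r} \<and> j \<in> {1..r} \<and> i \<noteq> j \<and> nbhdQ r k Q j \<subseteq> nbhd E i}"

end

theory Submission
  imports Defs
begin

text \<open>
  A vertex of degree at least (k-1) r/k + 2 must contain two whole cliques of Q in its
  neighbourhood, since otherwise it has at most k-1 neighbours in all cliques but one. Counting
  neighbours clique by clique in the same way shows that any two vertices have a common
  out-neighbour in D. Hence the set of vertices reachable from a vertex whose reachable set is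
  smallest is reachable from every vertex, and it is closed under out-arcs. An element c of it
  sends an arc to every vertex of the at least two cliques lying in N_R(c), so all vertices of
  these cliques are reachable from everywhere.
\<close>

lemma trancl_absorbing_set:
  assumes "finite V" and "V \<noteq> {}" and "A \<subseteq> V \<times> V"
    and meet: "\<And>x y. x \<in> V \<Longrightarrow> y \<in> V \<Longrightarrow> \<exists>z. (x, z) \<in> A\<^sup>+ \<and> (y, z) \<in> A\<^sup>+"
  obtains C where "C \<noteq> {}" "C \<subseteq> V" "\<And>c z. c \<in> C \<Longrightarrow> (c, z) \<in> A \<Longrightarrow> z \<in> C"
    "\<And>x c. x \<in> V \<Longrightarrow> c \<in> C \<Longrightarrow> (x, c) \<in> A\<^sup>+"
proof -
  define reach where "reach x = {z. (x, z) \<in> A\<^sup>+}" for x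
  have reach_sub: "reach x \<subseteq> V" for x
    using trancl_subset_Sigma[OF \<open>A \<subseteq> V \<times> V\<close>] unfolding reach_def by blast
  have reach_fin: "finite (reach x)" for x
    using reach_sub \<open>finite V\<close> by (rule finite_subset)
  obtain x0 where x0: "x0 \<in> V" and x0_min: "\<And>y. y \<in> V \<Longrightarrow> card (reach x0) \<le> card (reach y)"
    using ex_has_least_nat[of "\<lambda>x. x \<in> V" _ "\<lambda>x. card (reach x)"] \<open>V \<noteq> {}\<close> by blast
  have reach_eq: "reach w = reach x0" if "w \<in> reach x0" for w
  proof -
    have "reach w \<subseteq> reach x0"
      using that unfolding reach_def by auto
    moreover have "card (reach x0) \<le> card (reach w)"
      using that reach_sub x0_min by blast
    ultimately show ?thesis
      by (rule card_seteq[OF reach_fin])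
  qed
  show thesis
  proof
    show "reach x0 \<noteq> {}"
      using meet[OF x0 x0] unfolding reach_def by blast
    show "reach x0 \<subseteq> V"
      by (rule reach_sub)
    show "z \<in> reach x0" if "c \<in> reach x0" "(c, z) \<in> A" for c z
      using that unfolding reach_def by auto
    show "(x, c) \<in> A\<^sup>+" if x: "x \<in> V" and c: "c \<in> reach x0" for x c
    proof -
      obtain w where "(x, w) \<in> A\<^sup>+" "w \<in> reach x0"
        using meet[OF x x0] unfolding reach_def by blast
      with c reach_eq show ?thesis
        unfolding reach_def by (metis mem_Collect_eq trancl_trans)
    qed
  qed
qed

context
  fixes r k :: nat and R :: "nat \<Rightarrow> nat \<Rightarrow> bool" and Q :: "nat \<Rightarrow> nat set"
  assumes graph: "simple_graph_on r R" and factor: "Kk_factor r k R Q"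
begin

lemma not_in_nbhd_self: "x \<notin> nbhd R x"
  using graph unfolding simple_graph_on_def nbhd_def by auto

lemma nbhd_subset: "nbhd R i \<subseteq> {1..r}"
  using graph unfolding simple_graph_on_def nbhd_def by auto

lemma clique_subset: "t \<in> {1..r div k} \<Longrightarrow> Q t \<subseteq> {1..r}"
  and card_clique: "t \<in> {1..r div k} \<Longrightarrow> card (Q t) = k"
  using factor unfolding Kk_factor_def by blast+

lemma cliques_cover: "(\<Union>t\<in>{1..r div k}. Q t) = {1..r}"
  using factor unfolding Kk_factor_def by blast

lemma finite_clique: "t \<in> {1..r div k} \<Longrightarrow> finite (Q t)"
  using clique_subset finite_subset by blast

lemma clique_unique:
  "s \<in> {1..r div k} \<Longrightarrow> t \<in> {1..r div k} \<Longrightarrow> x \<in> Q s \<Longrightarrow> x \<in> Q t \<Longrightarrow> s = t"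
  using factor unfolding Kk_factor_def by blast

lemma card_cliques_containing_le_1: "card {t \<in> {1..r div k}. x \<in> Q t} \<le> 1"
proof -
  have "\<forall>s \<in> {t \<in> {1..r div k}. x \<in> Q t}. \<forall>t \<in> {t \<in> {1..r div k}. x \<in> Q t}. s = t"
    using clique_unique by blast
  then show ?thesis
    unfolding One_nat_def by (subst card_le_Suc0_iff_eq) simp_all
qed

lemma nbhdQ_eq: "t \<in> {1..r div k} \<Longrightarrow> j \<in> Q t \<Longrightarrow> nbhdQ r k Q j = Q t - {j}"
  unfolding nbhdQ_def using clique_unique by blast

lemma arcsD_intro:
  assumes "t \<in> {1..r div k}" "j \<in> Q t" "i \<in> {1..r}" "i \<noteq> j" "Q t - {j} \<subseteq> nbhd R i"
  shows "(i, j) \<in> arcsD r k R Q"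
proof -
  have "j \<in> {1..r}"
    using assms(1,2) clique_subset by blast
  then show ?thesis
    using assms(3-) nbhdQ_eq[OF assms(1,2)] by (simp add: arcsD_def)
qed

lemma card_nbhd_eq_sum:
  "card (nbhd R i) = (\<Sum>t\<in>{1..r div k}. card (nbhd R i \<inter> Q t))"
proof -
  have "nbhd R i = (\<Union>t\<in>{1..r div k}. nbhd R i \<inter> Q t)"
    using nbhd_subset cliques_cover by blast
  also have "card \<dots> = (\<Sum>t\<in>{1..r div k}. card (nbhd R i \<inter> Q t))"
    by (rule card_UN_disjoint) (use finite_clique clique_unique in blast)+
  finally show ?thesis .
qed

lemma card_nbhd_inter_clique_le: "t \<in> {1..r div k} \<Longrightarrow> card (nbhd R i \<inter> Q t) \<le> k"
  using card_mono[OF finite_clique] card_clique by (metis inf_le2)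

lemma card_nbhd_inter_clique_eq_iff:
  "t \<in> {1..r div k} \<Longrightarrow> card (nbhd R i \<inter> Q t) = k \<longleftrightarrow> Q t \<subseteq> nbhd R i"
  using card_subset_eq[OF finite_clique, of t "nbhd R i \<inter> Q t"] card_clique
  by (metis Int_absorb1 inf.cobounded2 inf_commute)

lemma two_cliques_in_nbhd:
  assumes deg: "(k - 1) * (r div k) + 2 \<le> card (nbhd R i)"
  shows "2 \<le> card {t \<in> {1..r div k}. Q t \<subseteq> nbhd R i}"
proof (rule ccontr)
  define I where "I = {1..r div k}"
  define D where "D = {t \<in> I. Q t \<subseteq> nbhd R i}"
  assume "\<not> ?thesis"
  then have "card D \<le> 1"
    unfolding D_def I_def by simp
  have "card (nbhd R i) \<le> (\<Sum>t\<in>I. (k - 1) + of_bool (t \<in> D))"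
    unfolding card_nbhd_eq_sum I_def[symmetric]
  proof (rule sum_mono)
    fix t assume "t \<in> I"
    then have "card (nbhd R i \<inter> Q t) \<le> k" "card (nbhd R i \<inter> Q t) = k \<longleftrightarrow> t \<in> D"
      using card_nbhd_inter_clique_le card_nbhd_inter_clique_eq_iff unfolding D_def I_def by auto
    then show "card (nbhd R i \<inter> Q t) \<le> (k - 1) + of_bool (t \<in> D)"
      by (cases "t \<in> D") auto
  qed
  also have "\<dots> = (r div k) * (k - 1) + card D"
    unfolding sum.distrib I_def D_def by (simp add: Int_def)
  finally show False
    using deg \<open>card D \<le> 1\<close> mult.commute[of "r div k" "k - 1"] by linarith
qed

text \<open>The common out-neighbour is the vertex of the clique missed by y, if there is one.\<close>
lemma common_out_neighbour_in_clique:
  assumes "k \<ge> 2" and t: "t \<in> {1..r div k}" and x: "x \<in> {1..r}" and y: "y \<in> {1..r}"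
    and "x \<notin> Q t" "y \<notin> Q t"
    and "card (nbhd R x \<inter> Q t) = k" and fy: "k - 1 \<le> card (nbhd R y \<inter> Q t)"
  shows "\<exists>z. (x, z) \<in> arcsD r k R Q \<and> (y, z) \<in> arcsD r k R Q"
proof -
  have Qx: "Q t \<subseteq> nbhd R x"
    using assms card_nbhd_inter_clique_eq_iff by blast
  obtain j where j: "j \<in> Q t" and Qy: "Q t - {j} \<subseteq> nbhd R y"
  proof (cases "Q t \<subseteq> nbhd R y")
    case True
    moreover have "Q t \<noteq> {}"
      using card_clique[OF t] \<open>k \<ge> 2\<close> by auto
    ultimately show thesis
      using that by blast
  next
    case False
    then obtain j where j: "j \<in> Q t" "j \<notin> nbhd R y" by auto
    have "card (Q t - {j}) = k - 1"
      using finite_clique[OF t] card_clique[OF t] j by simp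
    moreover have "nbhd R y \<inter> Q t \<subseteq> Q t - {j}"
      using j by blast
    ultimately have "nbhd R y \<inter> Q t = Q t - {j}"
      using card_seteq finite_clique[OF t] fy by (metis finite_Diff)
    then show thesis
      using that j by blast
  qed
  show ?thesis
    using arcsD_intro[OF t j x] arcsD_intro[OF t j y] Qx Qy j assms by blast
qed

lemma common_out_neighbour:
  assumes k: "k \<ge> 2" and x: "x \<in> {1..r}" and y: "y \<in> {1..r}"
    and deg_x: "(k - 1) * (r div k) + 2 \<le> card (nbhd R x)"
    and deg_y: "(k - 1) * (r div k) + 2 \<le> card (nbhd R y)"
  shows "\<exists>z. (x, z) \<in> arcsD r k R Q \<and> (y, z) \<in> arcsD r k R Q"
proof (rule ccontr)
  define I where "I = {1..r div k}"
  let ?fx = "\<lambda>t. card (nbhd R x \<inter> Q t)" and ?fy = "\<lambda>t. card (nbhd R y \<inter> Q t)"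
  assume no_common: "\<not> ?thesis"
  have "?fx t + ?fy t \<le> (2 * k - 2) + (of_bool (x \<in> Q t) + of_bool (y \<in> Q t))"
    if t: "t \<in> I" for t
  proof -
    have le: "?fx t \<le> k" "?fy t \<le> k"
      using card_nbhd_inter_clique_le t unfolding I_def by auto
    have "x \<in> Q t \<Longrightarrow> ?fx t \<noteq> k" "y \<in> Q t \<Longrightarrow> ?fy t \<noteq> k"
      using card_nbhd_inter_clique_eq_iff t not_in_nbhd_self unfolding I_def by blast+
    moreover have "x \<notin> Q t \<Longrightarrow> y \<notin> Q t \<Longrightarrow> \<not> (?fx t = k \<and> k - 1 \<le> ?fy t)"
      "x \<notin> Q t \<Longrightarrow> y \<notin> Q t \<Longrightarrow> \<not> (?fy t = k \<and> k - 1 \<le> ?fx t)"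
      using common_out_neighbour_in_clique[OF k _ x y] common_out_neighbour_in_clique[OF k _ y x]
        no_common t unfolding I_def by blast+
    ultimately show ?thesis
      using le k by (cases "x \<in> Q t"; cases "y \<in> Q t") auto
  qed
  then have "(\<Sum>t\<in>I. ?fx t + ?fy t)
      \<le> (\<Sum>t\<in>I. (2 * k - 2) + (of_bool (x \<in> Q t) + of_bool (y \<in> Q t)))"
    by (rule sum_mono)
  also have "\<dots> = (r div k) * (2 * k - 2)
      + (card {t \<in> I. x \<in> Q t} + card {t \<in> I. y \<in> Q t})"
    unfolding sum.distrib I_def by (simp add: Int_def)
  also have "\<dots> \<le> 2 * ((k - 1) * (r div k)) + 2"
    using card_cliques_containing_le_1[of x] card_cliques_containing_le_1[of y]
    unfolding I_def by (simp add: algebra_simps)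
  finally show False
    using deg_x deg_y card_nbhd_eq_sum[of x] card_nbhd_eq_sum[of y]
    unfolding I_def sum.distrib by linarith
qed

lemma card_cliques_reachable_from_all_ge_2:
  assumes k: "k \<ge> 2" and "r \<noteq> 0"
    and deg: "\<And>i. i \<in> {1..r} \<Longrightarrow> (k - 1) * (r div k) + 2 \<le> card (nbhd R i)"
  shows "2 \<le> card {s \<in> {1..r div k}. \<forall>j \<in> Q s. \<forall>i \<in> {1..r} - {j}.
                (i, j) \<in> (arcsD r k R Q)\<^sup>+}"
proof -
  let ?A = "arcsD r k R Q"
  have nonempty: "{1..r} \<noteq> {}"
    using \<open>r \<noteq> 0\<close> by simp
  have arcs: "?A \<subseteq> {1..r} \<times> {1..r}"
    by (auto simp: arcsD_def)
  have meet: "\<exists>z. (x, z) \<in> ?A\<^sup>+ \<and> (y, z) \<in> ?A\<^sup>+" if "x \<in> {1..r}" "y \<in> {1..r}" for x y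
    using common_out_neighbour[OF k that deg[OF that(1)] deg[OF that(2)]] by blast
  obtain C where "C \<noteq> {}" "C \<subseteq> {1..r}"
    and closed: "\<And>c z. c \<in> C \<Longrightarrow> (c, z) \<in> ?A \<Longrightarrow> z \<in> C"
    and absorbing: "\<And>x c. x \<in> {1..r} \<Longrightarrow> c \<in> C \<Longrightarrow> (x, c) \<in> ?A\<^sup>+"
    using trancl_absorbing_set[OF finite_atLeastAtMost nonempty arcs] meet by blast
  then obtain c where c: "c \<in> C" "c \<in> {1..r}"
    by blast
  have "(i, j) \<in> ?A\<^sup>+"
    if t: "t \<in> {1..r div k}" "Q t \<subseteq> nbhd R c" and j: "j \<in> Q t" and i: "i \<in> {1..r} - {j}"
    for t j i
  proof -
    have "c \<noteq> j"
      using t j not_in_nbhd_self by blast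
    then have "j \<in> C"
      using arcsD_intro[OF t(1) j c(2)] t(2) closed[OF c(1)] by blast
    then show ?thesis
      using absorbing i by blast
  qed
  then have "{t \<in> {1..r div k}. Q t \<subseteq> nbhd R c}
      \<subseteq> {s \<in> {1..r div k}. \<forall>j \<in> Q s. \<forall>i \<in> {1..r} - {j}. (i, j) \<in> ?A\<^sup>+}"
    by blast
  then have "card {t \<in> {1..r div k}. Q t \<subseteq> nbhd R c}
      \<le> card {s \<in> {1..r div k}. \<forall>j \<in> Q s. \<forall>i \<in> {1..r} - {j}. (i, j) \<in> ?A\<^sup>+}"
    by (rule card_mono[rotated]) simp
  then show ?thesis
    using two_cliques_in_nbhd[OF deg[OF c(2)]] by linarith
qed

end

lemma card_nbhd_ge_of_min_degree:
  assumes "k \<ge> 1" and "k dvd r" and "2 \<le> \<epsilon> * real r"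
    and "min_degree_ge r R ((1 - 1 / real k + \<epsilon>) * real r)" and "i \<in> {1..r}"
  shows "(k - 1) * (r div k) + 2 \<le> card (nbhd R i)"
proof -
  have "(1 - 1 / real k + \<epsilon>) * real r = real ((k - 1) * (r div k)) + \<epsilon> * real r"
    using assms(1,2) by (auto simp: of_nat_diff field_simps elim!: dvdE)
  moreover have "(1 - 1 / real k + \<epsilon>) * real r \<le> real (card (nbhd R i))"
    using assms(4,5) unfolding min_degree_ge_def by blast
  ultimately have "real ((k - 1) * (r div k) + 2) \<le> real (card (nbhd R i))"
    using assms(3) by simp
  then show ?thesis
    by (simp only: of_nat_le_iff)
qed

theorem claim5p2:
  fixes k r :: nat and \<epsilon> :: real and R :: "nat \<Rightarrow> nat \<Rightarrow> bool" and Q :: "nat \<Rightarrow> nat set"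
  assumes "k \<ge> 2" and "\<epsilon> > 0" and "k dvd r" and "real r \<ge> 6 / \<epsilon>"
    and "simple_graph_on r R"
    and "min_degree_ge r R ((1 - 1 / real k + \<epsilon>) * real r)"
    and "Kk_factor r k R Q"
  shows "card {s \<in> {1..r div k}. \<forall>j \<in> Q s. \<forall>i \<in> {1..r} - {j}.
                (i, j) \<in> (arcsD r k R Q)\<^sup>+} \<ge> 2"
proof -
  have "6 \<le> \<epsilon> * real r"
    using assms(2,4) by (simp add: divide_le_eq mult.commute)
  then have "r \<noteq> 0"
    by (cases r) auto
  have "(k - 1) * (r div k) + 2 \<le> card (nbhd R i)" if "i \<in> {1..r}" for i
    using card_nbhd_ge_of_min_degree[OF _ assms(3) _ assms(6) that] \<open>6 \<le> \<epsilon> * real r\<close> assms(1)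
    by simp
  then show ?thesis
    using card_cliques_reachable_from_all_ge_2[OF assms(5,7,1) \<open>r \<noteq> 0\<close>] by blast
qed

end
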